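(* The Eulerian polynomials $A_n(q)=\sum_{k=0}^nA(n,k)q^k$, $n\ge 0$, form a $q$-log-convex sequence.
   Context: The Eulerian numbers $A(n,k)$ are given by $A(0,0)=1$, $A(n,k)=0$ unless $0\le k\le n$, and $A(n,k)=kA(n-1,k)+(n-k+1)A(n-1,k-1)$ for $n\ge 1$; for $n\ge1$, $A(n,k)$ is the number of permutations of $\{1,\dots,n\}$ with exactly $k-1$ descents. For real polynomials $f,g$ write $f\le_q g$ if $g-f$ has nonnegative coefficients; a sequence $\{P_n(q)\}_{n\ge0}$ is $q$-log-convex if $P_n(q)^2\le_q P_{n-1}(q)P_{n+1}(q)$ for all $n\ge 1$. *)

theory Defs
  imports "HOL-Computational_Algebra.Polynomial"
begin

fun eulerian :: "nat \<Rightarrow> nat \<Rightarrow> nat" where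
  "eulerian 0 k = (if k = 0 then 1 else 0)"
| "eulerian (Suc n) k =
     (if k > Suc n then 0
      else k * eulerian n k + (if k = 0 then 0 else (Suc n - k + 1) * eulerian n (k - 1)))"

definition eulerian_poly :: "nat \<Rightarrow> real poly" where
  "eulerian_poly n = (\<Sum>k\<le>n. monom (real (eulerian n k)) k)"

definition q_le :: "real poly \<Rightarrow> real poly \<Rightarrow> bool" where
  "q_le f g \<longleftrightarrow> (\<forall>i. coeff (g - f) i \<ge> 0)"

definition q_log_convex :: "(nat \<Rightarrow> real poly) \<Rightarrow> bool" where
  "q_log_convex P \<longleftrightarrow> (\<forall>n\<ge>1. q_le ((P n)^2) (P (n - 1) * P (n + 1)))"

end

theory Submission
  imports Defs
begin

(* Let T_n p = n p + (1 - q) p', so that A_(n+1) = q (A_n + T_n A_n), and put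
   M n k = (T_n - (k - 1)) ... (T_n - 0) A_n.  Then M (n+1) k = sum_i M n i * J i k for the
   tridiagonal production matrix J with J (k-1) k = k^2, J k k = k + (k+1) q, J (k+1) k = q,
   whose 2x2 minors have nonnegative coefficients.  By Cauchy-Binet, nonnegativity of the
   minors M n k * M (n+1) l - M n l * M (n+1) k (k < l) propagates from n to n + 1, and since
   A_(n+1) = q (M n 0 + M n 1), the minor with k = 0, l = 1 times q is A_(n-1) A_(n+1) - A_n^2. *)

definition nonneg_coeffs :: "'a::linordered_semidom poly \<Rightarrow> bool" where
  "nonneg_coeffs p \<longleftrightarrow> (\<forall>i. coeff p i \<ge> 0)"

lemma q_le_iff_nonneg_coeffs: "q_le f g \<longleftrightarrow> nonneg_coeffs (g - f)"
  by (simp add: q_le_def nonneg_coeffs_def)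

lemma nonneg_coeffs_0 [simp]: "nonneg_coeffs 0"
  by (simp add: nonneg_coeffs_def)

lemma nonneg_coeffs_pCons_iff [simp]:
  "nonneg_coeffs (pCons a p) \<longleftrightarrow> a \<ge> 0 \<and> nonneg_coeffs p"
  by (auto simp: nonneg_coeffs_def coeff_pCons split: nat.splits)

lemma nonneg_coeffs_1 [simp]: "nonneg_coeffs 1"
  by (simp add: one_pCons)

lemma nonneg_coeffs_of_nat [simp]: "nonneg_coeffs (of_nat n)"
  by (simp add: of_nat_poly)

lemma nonneg_coeffs_add [intro]:
  "nonneg_coeffs p \<Longrightarrow> nonneg_coeffs q \<Longrightarrow> nonneg_coeffs (p + q)"
  by (simp add: nonneg_coeffs_def)

lemma nonneg_coeffs_mult [intro]:
  "nonneg_coeffs p \<Longrightarrow> nonneg_coeffs q \<Longrightarrow> nonneg_coeffs (p * q)"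
  unfolding nonneg_coeffs_def coeff_mult by (auto intro!: sum_nonneg)

lemma nonneg_coeffs_sum [intro]:
  "(\<And>i. i \<in> A \<Longrightarrow> nonneg_coeffs (f i)) \<Longrightarrow> nonneg_coeffs (sum f A)"
  unfolding nonneg_coeffs_def coeff_sum by (auto intro!: sum_nonneg)

lemma nonneg_coeffs_power [intro]: "nonneg_coeffs p \<Longrightarrow> nonneg_coeffs (p ^ m)"
  by (induction m) auto

lemma cauchy_binet_minor2:
  fixes x y :: "'b::linorder \<Rightarrow> 'a::comm_ring_1" and P :: "'b \<Rightarrow> 'c \<Rightarrow> 'a"
  assumes "finite A"
  shows "(\<Sum>i\<in>A. x i * P i k) * (\<Sum>j\<in>A. y j * P j l)
      - (\<Sum>i\<in>A. x i * P i l) * (\<Sum>j\<in>A. y j * P j k)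
    = (\<Sum>i\<in>A. \<Sum>j\<in>A. if i < j
        then (x i * y j - x j * y i) * (P i k * P j l - P i l * P j k) else 0)"
proof -
  define g where "g i j = x i * y j * (P i k * P j l - P i l * P j k)" for i j
  have "(\<Sum>i\<in>A. x i * P i k) * (\<Sum>j\<in>A. y j * P j l)
      - (\<Sum>i\<in>A. x i * P i l) * (\<Sum>j\<in>A. y j * P j k)
      = (\<Sum>i\<in>A. \<Sum>j\<in>A. g i j)"
    by (simp add: g_def sum_product sum_subtractf[symmetric] algebra_simps)
  also have "\<dots> = (\<Sum>i\<in>A. \<Sum>j\<in>A. if i < j then g i j else 0)
      + (\<Sum>i\<in>A. \<Sum>j\<in>A. if j < i then g i j else 0)"
    by (auto simp: g_def sum.distrib[symmetric] intro!: sum.cong)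
  also have "(\<Sum>i\<in>A. \<Sum>j\<in>A. if j < i then g i j else 0)
      = (\<Sum>i\<in>A. \<Sum>j\<in>A. if i < j then g j i else 0)"
    by (rule sum.swap)
  also have "(\<Sum>i\<in>A. \<Sum>j\<in>A. if i < j then g i j else 0) + \<dots>
      = (\<Sum>i\<in>A. \<Sum>j\<in>A. if i < j
          then (x i * y j - x j * y i) * (P i k * P j l - P i l * P j k) else 0)"
    by (auto simp: g_def sum.distrib[symmetric] algebra_simps intro!: sum.cong)
  finally show ?thesis .
qed

lemma nonneg_coeffs_cauchy_binet_minor2:
  fixes x y :: "'b::linorder \<Rightarrow> 'a::linordered_idom poly" and P :: "'b \<Rightarrow> 'c \<Rightarrow> 'a poly"
  assumes "finite A"
    and "\<And>i j. i \<in> A \<Longrightarrow> j \<in> A \<Longrightarrow> i < j \<Longrightarrow> nonneg_coeffs (x i * y j - x j * y i)"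
    and "\<And>i j. i \<in> A \<Longrightarrow> j \<in> A \<Longrightarrow> i < j \<Longrightarrow> nonneg_coeffs (P i k * P j l - P i l * P j k)"
  shows "nonneg_coeffs ((\<Sum>i\<in>A. x i * P i k) * (\<Sum>j\<in>A. y j * P j l)
    - (\<Sum>i\<in>A. x i * P i l) * (\<Sum>j\<in>A. y j * P j k))"
  unfolding cauchy_binet_minor2[OF \<open>finite A\<close>] using assms(2,3)
  by (auto intro!: nonneg_coeffs_sum nonneg_coeffs_mult)

lemma eulerian_eq_0: "n < k \<Longrightarrow> eulerian n k = 0"
  by (induction n arbitrary: k) simp_all

lemma coeff_eulerian_poly: "coeff (eulerian_poly n) i = real (eulerian n i)"
  using eulerian_eq_0[of n i] by (auto simp: eulerian_poly_def coeff_sum coeff_monom sum.delta)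

lemma eulerian_poly_0: "eulerian_poly 0 = 1"
  by (simp add: eulerian_poly_def)

definition eulerian_op :: "nat \<Rightarrow> real poly \<Rightarrow> real poly" where
  "eulerian_op n p = of_nat n * p + [:1, -1:] * pderiv p"

lemma eulerian_op_add: "eulerian_op n (p + r) = eulerian_op n p + eulerian_op n r"
  by (simp add: eulerian_op_def pderiv_add algebra_simps)

lemma eulerian_op_diff: "eulerian_op n (p - r) = eulerian_op n p - eulerian_op n r"
  by (simp add: eulerian_op_def pderiv_diff algebra_simps)

lemma eulerian_op_of_nat_mult: "eulerian_op n (of_nat m * p) = of_nat m * eulerian_op n p"
  by (simp add: eulerian_op_def pderiv_mult algebra_simps)

lemma eulerian_op_Suc: "eulerian_op (Suc n) p = eulerian_op n p + p"
  by (simp add: eulerian_op_def algebra_simps)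

lemma eulerian_op_Suc_X_mult:
  "eulerian_op (Suc n) ([:0, 1:] * p) = [:0, 1:] * eulerian_op n p + p"
  by (simp add: eulerian_op_def pderiv_mult pderiv_pCons algebra_simps)

lemma eulerian_poly_Suc:
  "eulerian_poly (Suc n) = [:0, 1:] * (eulerian_poly n + eulerian_op n (eulerian_poly n))"
proof (rule poly_eqI)
  fix i
  let ?rhs = "[:0, 1:] * (eulerian_poly n + eulerian_op n (eulerian_poly n))"
  show "coeff (eulerian_poly (Suc n)) i = coeff ?rhs i"
  proof (cases i)
    case (Suc j)
    have "coeff ?rhs i
        = real (Suc j) * real (eulerian n (Suc j)) + (real n + 1 - real j) * real (eulerian n j)"
      using Suc by (cases j)
        (simp_all add: eulerian_op_def coeff_pderiv coeff_eulerian_poly of_nat_poly algebra_simps)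
    moreover have "real (eulerian (Suc n) (Suc j))
        = real (Suc j) * real (eulerian n (Suc j)) + (real n + 1 - real j) * real (eulerian n j)"
    proof (cases "j \<le> n")
      case True
      then have "eulerian (Suc n) (Suc j) = Suc j * eulerian n (Suc j) + (n - j + 1) * eulerian n j"
        by simp
      then have "real (eulerian (Suc n) (Suc j))
          = real (Suc j) * real (eulerian n (Suc j)) + real (n - j + 1) * real (eulerian n j)"
        by (metis of_nat_add of_nat_mult)
      also have "real (n - j + 1) = real n + 1 - real j"
        using True by (simp add: of_nat_diff)
      finally show ?thesis .
    qed (simp add: eulerian_eq_0)
    ultimately show ?thesis
      using Suc by (simp add: coeff_eulerian_poly)
  qed (simp add: coeff_eulerian_poly)
qed

fun eulerian_tableau :: "nat \<Rightarrow> nat \<Rightarrow> real poly" where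
  "eulerian_tableau n 0 = eulerian_poly n"
| "eulerian_tableau n (Suc k) = eulerian_op n (eulerian_tableau n k) - of_nat k * eulerian_tableau n k"

(* For k = 0 the first summand vanishes, whatever the truncated k - 1 denotes. *)
lemma eulerian_tableau_Suc_row:
  "eulerian_tableau (Suc n) k = of_nat (k ^ 2) * eulerian_tableau n (k - 1)
     + (of_nat k + [:0, 1:]) * eulerian_tableau n k + [:0, 1:] * eulerian_op n (eulerian_tableau n k)"
proof (induction k)
  case 0
  show ?case by (simp add: eulerian_poly_Suc algebra_simps)
next
  case (Suc k)
  define q :: "real poly" where "q = [:0, 1:]"
  let ?E = "eulerian_op n" and ?E' = "eulerian_op (Suc n)"
  let ?M = "eulerian_tableau n" and ?M' = "eulerian_tableau (Suc n)"
  let ?R = "of_nat (k ^ 2) * ?M (k - 1) + of_nat k * ?M k + q * ?M k + q * ?E (?M k)"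
  have IH: "?M' k = ?R"
    using Suc.IH by (simp add: q_def distrib_right)
  have "?M' (Suc k) = ?E' ?R - of_nat k * ?R"
    by (simp only: eulerian_tableau.simps(2) IH)
  also have "?E' ?R = of_nat (k ^ 2) * (?E (?M (k - 1)) + ?M (k - 1))
      + of_nat k * (?E (?M k) + ?M k) + (q * ?E (?M k) + ?M k) + (q * ?E (?E (?M k)) + ?E (?M k))"
    by (simp only: eulerian_op_add eulerian_op_of_nat_mult eulerian_op_Suc_X_mult[folded q_def])
      (simp only: eulerian_op_Suc)
  also have "\<dots> - of_nat k * ?R
      = of_nat (k ^ 2) * (?E (?M (k - 1)) + ?M (k - 1) - of_nat k * ?M (k - 1) - ?M k)
      + (of_nat k + 1) * ?E (?M k) + (of_nat k + 1) * ?M k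
      + q * (?E (?E (?M k)) + ?E (?M k) - of_nat k * ?E (?M k) - of_nat k * ?M k)"
    by (simp add: algebra_simps power2_eq_square)
  also have "of_nat (k ^ 2) * (?E (?M (k - 1)) + ?M (k - 1) - of_nat k * ?M (k - 1) - ?M k) = 0"
    by (cases k) (simp_all add: algebra_simps)
  finally show ?case
    by (simp add: q_def eulerian_op_diff eulerian_op_of_nat_mult algebra_simps power2_eq_square)
qed

definition eulerian_jacobi :: "nat \<Rightarrow> nat \<Rightarrow> real poly" where
  "eulerian_jacobi i k =
     (if Suc i = k then of_nat (k ^ 2)
      else if i = k then of_nat k + of_nat (Suc k) * [:0, 1:]
      else if i = Suc k then [:0, 1:]
      else 0)"

lemma eulerian_tableau_Suc_eq_sum:
  assumes "Suc k \<le> N"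
  shows "eulerian_tableau (Suc n) k = (\<Sum>i\<le>N. eulerian_tableau n i * eulerian_jacobi i k)"
proof -
  let ?M = "eulerian_tableau n"
  have "(\<Sum>i\<le>N. ?M i * eulerian_jacobi i k)
      = (\<Sum>i\<le>N. (if Suc i = k then of_nat (k ^ 2) * ?M (k - 1) else 0)
          + (if i = k then (of_nat k + of_nat (Suc k) * [:0, 1:]) * ?M k else 0)
          + (if i = Suc k then [:0, 1:] * ?M (Suc k) else 0))"
    by (rule sum.cong) (auto simp: eulerian_jacobi_def)
  also have "\<dots> = of_nat (k ^ 2) * ?M (k - 1) + (of_nat k + of_nat (Suc k) * [:0, 1:]) * ?M k
      + [:0, 1:] * ?M (Suc k)"
    using assms by (cases k) (simp_all add: sum.distrib)
  also have "\<dots> = eulerian_tableau (Suc n) k"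
    by (simp only: eulerian_tableau_Suc_row eulerian_tableau.simps(2)) (simp add: algebra_simps)
  finally show ?thesis ..
qed

lemma nonneg_coeffs_eulerian_jacobi: "nonneg_coeffs (eulerian_jacobi i k)"
  by (auto simp: eulerian_jacobi_def intro!: nonneg_coeffs_add nonneg_coeffs_power)

lemma nonneg_coeffs_eulerian_jacobi_minor:
  assumes "i < j" "k < l"
  shows "nonneg_coeffs
    (eulerian_jacobi i k * eulerian_jacobi j l - eulerian_jacobi i l * eulerian_jacobi j k)"
proof (cases "i = k \<and> j = Suc k \<and> l = Suc k")
  case True
  then have "eulerian_jacobi i k * eulerian_jacobi j l - eulerian_jacobi i l * eulerian_jacobi j k
      = [:of_nat (k * (k + 1)), of_nat (k * (k + 2)), of_nat ((k + 1) * (k + 2)):]"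
    by (simp add: eulerian_jacobi_def of_nat_poly algebra_simps power2_eq_square)
  then show ?thesis by simp
next
  case False
  with assms have "eulerian_jacobi i l * eulerian_jacobi j k = 0"
    by (auto simp: eulerian_jacobi_def)
  then show ?thesis
    by (simp only: diff_zero) (intro nonneg_coeffs_mult nonneg_coeffs_eulerian_jacobi)
qed

lemma eulerian_tableau_0_Suc: "eulerian_tableau 0 (Suc k) = 0"
  by (induction k) (simp_all add: eulerian_poly_0 eulerian_op_def)

lemma nonneg_coeffs_eulerian_tableau: "nonneg_coeffs (eulerian_tableau n k)"
proof (induction n arbitrary: k)
  case 0
  show ?case
    by (cases k) (simp_all add: eulerian_poly_0 eulerian_tableau_0_Suc del: eulerian_tableau.simps(2))
next
  case (Suc n)
  show ?case
    unfolding eulerian_tableau_Suc_eq_sum[OF order.refl]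
    by (intro nonneg_coeffs_sum nonneg_coeffs_mult Suc.IH nonneg_coeffs_eulerian_jacobi)
qed

lemma nonneg_coeffs_eulerian_tableau_minor:
  "k < l \<Longrightarrow> nonneg_coeffs (eulerian_tableau n k * eulerian_tableau (Suc n) l
     - eulerian_tableau n l * eulerian_tableau (Suc n) k)"
proof (induction n arbitrary: k l)
  case 0
  then obtain l' where "l = Suc l'" by (cases l) auto
  then show ?case
    by (simp add: eulerian_tableau_0_Suc nonneg_coeffs_mult nonneg_coeffs_eulerian_tableau
        del: eulerian_tableau.simps)
next
  case (Suc n)
  have "Suc k \<le> Suc l" "Suc l \<le> Suc l"
    using Suc.prems by simp_all
  note sums = this[THEN eulerian_tableau_Suc_eq_sum]
  show ?case
    unfolding sums[of n] sums[of "Suc n"]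
    by (rule nonneg_coeffs_cauchy_binet_minor2)
      (use Suc.IH Suc.prems nonneg_coeffs_eulerian_jacobi_minor in auto)
qed

lemma eulerian_poly_Suc_eq_tableau:
  "eulerian_poly (Suc n) = [:0, 1:] * (eulerian_poly n + eulerian_tableau n 1)"
  by (simp add: eulerian_poly_Suc)

theorem proposition4p6:
  shows "q_log_convex eulerian_poly"
  unfolding q_log_convex_def q_le_iff_nonneg_coeffs
proof (intro allI impI)
  fix n :: nat
  assume "1 \<le> n"
  then obtain m where n: "n = Suc m"
    by (cases n) auto
  have log_convex_step: "a0 * a2 - a1 ^ 2 = q * (a0 * l1 - l0 * a1)"
    if "a1 = q * (a0 + l0)" "a2 = q * (a1 + l1)" for a0 a1 a2 l0 l1 q :: "real poly"
    using that by (simp add: algebra_simps power2_eq_square)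
  have "nonneg_coeffs ([:0, 1:] * (eulerian_poly m * eulerian_tableau (Suc m) 1
      - eulerian_tableau m 1 * eulerian_poly (Suc m)))"
    using nonneg_coeffs_eulerian_tableau_minor[of 0 1 m]
    by (simp add: nonneg_coeffs_mult del: eulerian_tableau.simps(2))
  then show "nonneg_coeffs (eulerian_poly (n - 1) * eulerian_poly (n + 1) - eulerian_poly n ^ 2)"
    unfolding n using log_convex_step[OF eulerian_poly_Suc_eq_tableau eulerian_poly_Suc_eq_tableau]
    by simp
qed

end
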